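(* Let $\Sigma$ be a driftless control-affine system on $\mathcal M$ with sub-Riemannian distance $d$. Let $x:[0,T]\to\mathcal M$ be a dynamically feasible trajectory and consider a partition $0=\tau_1<\tau_2<\dots<\tau_M=T$. Let $\rho>0$, $\beta\in(0,1)$ and $\alpha\in[0,1]$. Suppose $y_1,\dots,y_M\in\mathcal M$ satisfy (a) $y_m\in B(x(\tau_m),\rho)$ for all $m\in\{1,\dots,M\}$, and (b) more than a $(1-\alpha)$ fraction of the $y_m$ satisfy $y_m\in B(x(\tau_m),\beta\rho)$. Let $y^*$ be a trajectory sequentially connecting $y_1,\dots,y_M$ in which each segment from $y_m$ to $y_{m+1}$ has arc length $d(y_m,y_{m+1})$. Then $$c(y^* )\le c(x)+2M\rho(\beta+\alpha-\alpha\beta).$$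
   Context: A driftless control-affine system on $\mathcal M\subset\mathbb R^n$ is $\dot x(t)=\sum_{i=1}^m g_i(x(t))u_i(t)$ with $g_i$ smooth vector fields and controls $u(t)\in U$, $U\subset\mathbb R^m$ closed, bounded, symmetric about the origin, $0$ in the interior of its convex hull. A dynamically feasible trajectory is a solution $x:[0,T]\to\mathcal M$ for some control $u:[0,T]\to U$. The cost $c(x)=\int_0^T\|\dot x(t)\|dt$ is the Euclidean arc length. The sub-Riemannian distance $d(p,q)$ is the infimum of arc lengths of dynamically feasible trajectories connecting $p$ and $q$; it is a metric on $\mathcal M$ (by time-reversibility). $B(p,r)=\{q\in\mathcal M: d(p,q)\le r\}$. Thus $c(y^* )=\sum_{m=1}^{M-1}d(y_m,y_{m+1})$. *)

theory Defs
  imports "HOL-Analysis.Analysis" "HOL-Library.Extended_Real"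
begin

fun Ck :: "nat \<Rightarrow> 'a::euclidean_space set \<Rightarrow> ('a \<Rightarrow> 'b::real_normed_vector) \<Rightarrow> bool" where
  "Ck 0 S f = continuous_on S f"
| "Ck (Suc k) S f = (\<exists>f'. (\<forall>x\<in>S. (f has_derivative f' x) (at x)) \<and> (\<forall>v. Ck k S (\<lambda>x. f' x v)))"

definition smooth_on :: "'a::euclidean_space set \<Rightarrow> ('a \<Rightarrow> 'b::real_normed_vector) \<Rightarrow> bool" where
  "smooth_on S f \<longleftrightarrow> (\<forall>k. Ck k S f)"

text \<open>Driftless control-affine system on \<M> \<subseteq> R^n with vector fields g i (i ranging over
  the finite index type 'm, so m = CARD('m)) and control set U \<subseteq> R^m.\<close>
definition driftless_system ::
  "(real^'n) set \<Rightarrow> ('m::finite \<Rightarrow> real^'n \<Rightarrow> real^'n) \<Rightarrow> (real^'m) set \<Rightarrow> bool" where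
  "driftless_system \<M> g U \<longleftrightarrow>
     (\<exists>S. open S \<and> \<M> \<subseteq> S \<and> (\<forall>i. smooth_on S (g i))) \<and>
     closed U \<and> bounded U \<and> (\<forall>v\<in>U. - v \<in> U) \<and> 0 \<in> interior (convex hull U)"

text \<open>Dynamically feasible trajectory x on [0,T] with control u (Caratheodory solution:
  u measurable with values in U, x stays in \<M> and satisfies the integral equation).\<close>
definition feasible ::
  "(real^'n) set \<Rightarrow> ('m::finite \<Rightarrow> real^'n \<Rightarrow> real^'n) \<Rightarrow> (real^'m) set \<Rightarrow>
   (real \<Rightarrow> real^'n) \<Rightarrow> real \<Rightarrow> (real \<Rightarrow> real^'m) \<Rightarrow> bool" where
  "feasible \<M> g U x T u \<longleftrightarrow>
     0 \<le> T \<and> u measurable_on {0..T} \<and> (\<forall>t\<in>{0..T}. u t \<in> U \<and> x t \<in> \<M>) \<and>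
     (\<lambda>s. \<Sum>i\<in>UNIV. u s $ i *\<^sub>R g i (x s)) integrable_on {0..T} \<and>
     (\<forall>t\<in>{0..T}. x t = x 0 + integral {0..t} (\<lambda>s. \<Sum>i\<in>UNIV. u s $ i *\<^sub>R g i (x s)))"

definition arclength :: "(real \<Rightarrow> real^'n) \<Rightarrow> real \<Rightarrow> real" where
  "arclength x T = integral {0..T} (\<lambda>t. norm (vector_derivative x (at t within {0..T})))"

text \<open>Sub-Riemannian distance (infimum over feasible trajectories; +\<infinity> if none).\<close>
definition sr_dist ::
  "(real^'n) set \<Rightarrow> ('m::finite \<Rightarrow> real^'n \<Rightarrow> real^'n) \<Rightarrow> (real^'m) set \<Rightarrow>
   real^'n \<Rightarrow> real^'n \<Rightarrow> ereal" where
  "sr_dist \<M> g U p q =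
     (INF xTu \<in> {(x, T, u). feasible \<M> g U x T u \<and> x 0 = p \<and> x T = q}.
        ereal (arclength (fst xTu) (fst (snd xTu))))"

definition sr_ball ::
  "(real^'n) set \<Rightarrow> ('m::finite \<Rightarrow> real^'n \<Rightarrow> real^'n) \<Rightarrow> (real^'m) set \<Rightarrow>
   real^'n \<Rightarrow> real \<Rightarrow> (real^'n) set" where
  "sr_ball \<M> g U p r = {q \<in> \<M>. sr_dist \<M> g U p q \<le> ereal r}"

end

theory Submission
  imports Defs
begin

text \<open>
  By the triangle inequality each segment satisfies
  \<open>d(y\<^sub>m, y\<^sub>m\<^sub>+\<^sub>1) \<le> r\<^sub>m + d(x(\<tau>\<^sub>m), x(\<tau>\<^sub>m\<^sub>+\<^sub>1)) + r\<^sub>m\<^sub>+\<^sub>1\<close>, where \<open>r\<^sub>m\<close> is \<open>\<beta>\<rho>\<close> or \<open>\<rho>\<close>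
  according to which ball contains \<open>y\<^sub>m\<close>, and the middle term is at most the arc length of
  \<open>x\<close> on \<open>[\<tau>\<^sub>m, \<tau>\<^sub>m\<^sub>+\<^sub>1]\<close>. Summing, these arc lengths add up to \<open>c(x)\<close>, and each radius occurs at
  most twice; as more than \<open>(1 - \<alpha>) M\<close> radii equal \<open>\<beta>\<rho>\<close>, the radii sum to at most
  \<open>M\<rho>(\<beta> + \<alpha> - \<alpha>\<beta>)\<close>.

  Symmetry and the triangle inequality of \<open>d\<close> come from reversing and concatenating
  feasible trajectories. Adding arc lengths needs the speed \<open>\<parallel>x'\<parallel>\<close> to be integrable: feasible
  trajectories are Lipschitz, and the derivative of a continuous function is Lebesgue
  measurable because its differentiability set is cut out by a countable Cauchy criterion.
\<close>

section \<open>Derivatives of continuous and of Lipschitz functions\<close>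

definition diff_quot :: "(real \<Rightarrow> 'a::real_normed_vector) \<Rightarrow> real \<Rightarrow> real \<Rightarrow> 'a" where
  "diff_quot f t h = (1 / h) *\<^sub>R (f (t + h) - f t)"

lemma continuous_on_diff_quot:
  assumes "continuous_on UNIV f"
  shows "continuous_on UNIV (\<lambda>t. diff_quot f t h)"
proof -
  have "continuous_on UNIV (\<lambda>t. f (t + h))"
    by (rule continuous_on_compose2[OF assms]) (auto intro: continuous_intros)
  then show ?thesis
    unfolding diff_quot_def by (intro continuous_intros assms)
qed

lemma has_vector_derivative_iff_diff_quot:
  "(f has_vector_derivative v) (at t) \<longleftrightarrow> (diff_quot f t \<longlongrightarrow> v) (at 0)"
proof -
  have "norm (f (t + h) - f t - h *\<^sub>R v) / \<bar>h\<bar> = norm (diff_quot f t h - v)" if "h \<noteq> 0" for h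
  proof -
    have "diff_quot f t h - v = (1 / h) *\<^sub>R (f (t + h) - f t - h *\<^sub>R v)"
      using that by (simp add: diff_quot_def algebra_simps)
    then show ?thesis using that by (simp add: divide_inverse)
  qed
  then have "\<forall>\<^sub>F h in at 0. norm (f (t + h) - f t - h *\<^sub>R v) / norm h = norm (diff_quot f t h - v)"
    by (auto simp: eventually_at_filter)
  then have "((\<lambda>h. norm (f (t + h) - f t - h *\<^sub>R v) / norm h) \<longlongrightarrow> 0) (at 0)
      \<longleftrightarrow> ((\<lambda>h. norm (diff_quot f t h - v)) \<longlongrightarrow> 0) (at 0)"
    by (rule tendsto_cong)
  then show ?thesis
    unfolding has_vector_derivative_def has_derivative_at
    by (simp add: bounded_linear_scaleR_left tendsto_norm_zero_iff LIM_zero_iff)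
qed

lemma vector_differentiable_at_iff_cauchy_filter:
  fixes f :: "real \<Rightarrow> 'a::banach"
  shows "(\<exists>v. (f has_vector_derivative v) (at t)) \<longleftrightarrow> cauchy_filter (filtermap (diff_quot f t) (at 0))"
proof
  assume "\<exists>v. (f has_vector_derivative v) (at t)"
  then show "cauchy_filter (filtermap (diff_quot f t) (at 0))"
    unfolding has_vector_derivative_iff_diff_quot filterlim_def by (blast intro: nhds_imp_cauchy_filter)
next
  assume "cauchy_filter (filtermap (diff_quot f t) (at 0))"
  moreover have "filtermap (diff_quot f t) (at 0) \<noteq> bot"
    by (simp add: filtermap_bot_iff)
  ultimately obtain v where "filtermap (diff_quot f t) (at 0) \<le> nhds v"
    using cauchy_filter_complete_converges[OF _ complete_UNIV] by (metis principal_UNIV top_greatest)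
  then show "\<exists>v. (f has_vector_derivative v) (at t)"
    unfolding has_vector_derivative_iff_diff_quot filterlim_def by blast
qed

definition small_oscillation_near_0 :: "(real \<Rightarrow> 'a::metric_space) \<Rightarrow> nat \<Rightarrow> nat \<Rightarrow> bool" where
  "small_oscillation_near_0 Q j k \<longleftrightarrow>
     (\<forall>r s. r \<noteq> 0 \<longrightarrow> s \<noteq> 0 \<longrightarrow> \<bar>r\<bar> < 1 / Suc j \<longrightarrow> \<bar>s\<bar> < 1 / Suc j \<longrightarrow> dist (Q r) (Q s) \<le> 1 / Suc k)"

lemma cauchy_filter_at_0_iff_small_oscillation:
  fixes Q :: "real \<Rightarrow> 'a::metric_space"
  shows "cauchy_filter (filtermap Q (at 0)) \<longleftrightarrow> (\<forall>k. \<exists>j. small_oscillation_near_0 Q j k)"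
  unfolding cauchy_filter_metric_filtermap
proof (intro iffI allI impI)
  fix k :: nat
  assume "\<forall>e>0. \<exists>P. eventually P (at 0) \<and> (\<forall>r s. P r \<and> P s \<longrightarrow> dist (Q r) (Q s) < e)"
  moreover have "(0::real) < 1 / Suc k" by simp
  ultimately obtain P where ev: "eventually P (at 0)"
      and P: "\<And>r s. P r \<Longrightarrow> P s \<Longrightarrow> dist (Q r) (Q s) < 1 / Suc k"
    by blast
  obtain d where "d > 0" and d: "\<And>h. h \<noteq> 0 \<Longrightarrow> \<bar>h\<bar> < d \<Longrightarrow> P h"
    using ev unfolding eventually_at by auto
  obtain j :: nat where j: "1 / Suc j < d"
    using \<open>d > 0\<close> reals_Archimedean by (auto simp: divide_inverse)
  have "small_oscillation_near_0 Q j k"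
    unfolding small_oscillation_near_0_def using j by (blast intro: less_imp_le P d less_trans)
  then show "\<exists>j. small_oscillation_near_0 Q j k" ..
next
  fix e :: real
  assume osc: "\<forall>k. \<exists>j. small_oscillation_near_0 Q j k" and "0 < e"
  obtain k :: nat where k: "1 / Suc k < e"
    using \<open>0 < e\<close> reals_Archimedean by (auto simp: divide_inverse)
  obtain j where j: "small_oscillation_near_0 Q j k"
    using osc by blast
  define P where "P h \<longleftrightarrow> h \<noteq> 0 \<and> \<bar>h\<bar> < 1 / Suc j" for h :: real
  have "eventually P (at 0)"
    unfolding eventually_at P_def by (rule exI[of _ "1 / Suc j"]) auto
  moreover have "dist (Q r) (Q s) < e" if "P r" "P s" for r s
    using j that k unfolding small_oscillation_near_0_def P_def by force
  ultimately show "\<exists>P. eventually P (at 0) \<and> (\<forall>r s. P r \<and> P s \<longrightarrow> dist (Q r) (Q s) < e)"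
    by blast
qed

lemma sets_lebesgue_vector_differentiable:
  fixes f :: "real \<Rightarrow> 'a::banach"
  assumes "continuous_on UNIV f"
  shows "{t. \<exists>v. (f has_vector_derivative v) (at t)} \<in> sets lebesgue"
proof -
  define E where "E k j = {t. small_oscillation_near_0 (diff_quot f t) j k}" for k j
  have "closed (E k j)" for k j
    unfolding E_def small_oscillation_near_0_def
    by (intro closed_Collect_all closed_Collect_imp closed_Collect_le open_Collect_neq open_Collect_less
          continuous_intros continuous_on_diff_quot assms)
  then have "E k j \<in> sets lebesgue" for k j
    by (metis borel_closed sets_completionI_sets sets_lborel)
  then have "(\<Inter>k. \<Union>j. E k j) \<in> sets lebesgue"
    by (intro sets.countable_INT sets.countable_UN) auto
  moreover have "{t. \<exists>v. (f has_vector_derivative v) (at t)} = (\<Inter>k. \<Union>j. E k j)"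
    unfolding vector_differentiable_at_iff_cauchy_filter cauchy_filter_at_0_iff_small_oscillation E_def
    by blast
  ultimately show ?thesis by simp
qed

lemma vector_derivative_not_differentiable:
  "\<nexists>v. (f has_vector_derivative v) net \<Longrightarrow> vector_derivative f net = (SOME v. False)"
  unfolding vector_derivative_def by simp

lemma borel_measurable_vector_derivative:
  fixes f :: "real \<Rightarrow> 'a::banach"
  assumes cont: "continuous_on UNIV f"
  shows "(\<lambda>t. vector_derivative f (at t)) \<in> borel_measurable lebesgue"
proof -
  define D where "D = {t. \<exists>v. (f has_vector_derivative v) (at t)}"
  define q where "q n t = (if t \<in> D then diff_quot f t (1 / Suc n) else (SOME v. False))" for n t
  have meas: "q n \<in> borel_measurable lebesgue" for n
    unfolding q_def
  proof (rule measurable_If_set)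
    show "(\<lambda>t. diff_quot f t (1 / Suc n)) \<in> borel_measurable lebesgue"
      using continuous_imp_measurable_on_sets_lebesgue[OF continuous_on_diff_quot[OF cont]] by (simp add: lebesgue_on_UNIV_eq)
    show "D \<inter> space lebesgue \<in> sets lebesgue"
      using sets_lebesgue_vector_differentiable[OF cont] by (simp add: D_def)
  qed (rule measurable_const, simp)
  have lim: "(\<lambda>n. q n t) \<longlonglongrightarrow> vector_derivative f (at t)" for t
  proof (cases "t \<in> D")
    case True
    then obtain v where v: "(f has_vector_derivative v) (at t)" by (auto simp: D_def)
    have "filterlim (\<lambda>n. 1 / Suc n) (at (0::real)) sequentially"
      using LIMSEQ_inverse_real_of_nat by (simp add: filterlim_at divide_inverse)
    then have "(\<lambda>n. diff_quot f t (1 / Suc n)) \<longlonglongrightarrow> v"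
      by (rule filterlim_compose[OF has_vector_derivative_iff_diff_quot[THEN iffD1, OF v]])
    then show ?thesis using True by (simp add: q_def vector_derivative_at[OF v])
  next
    case False
    then show ?thesis by (simp add: q_def D_def vector_derivative_def)
  qed
  show ?thesis by (rule borel_measurable_LIMSEQ_metric[OF meas lim])
qed

lemma has_vector_derivative_norm_le_lipschitz:
  fixes f :: "real \<Rightarrow> 'a::real_normed_vector"
  assumes der: "(f has_vector_derivative v) (at t)" and lip: "B-lipschitz_on UNIV f"
  shows "norm v \<le> B"
proof (rule tendsto_upperbound)
  show "((\<lambda>h. norm (diff_quot f t h)) \<longlongrightarrow> norm v) (at 0)"
    using der by (intro tendsto_norm) (simp add: has_vector_derivative_iff_diff_quot)
  have "norm (diff_quot f t h) \<le> B" if "h \<noteq> 0" for h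
  proof -
    have "norm (f (t + h) - f t) \<le> B * \<bar>h\<bar>"
      using lipschitz_onD[OF lip, of "t + h" t] by (simp add: dist_norm)
    then show ?thesis
      using that by (simp add: diff_quot_def divide_le_eq)
  qed
  then show "\<forall>\<^sub>F h in at 0. norm (diff_quot f t h) \<le> B"
    by (auto simp: eventually_at_filter)
qed simp

lemma lipschitz_on_clamp_extension:
  fixes x :: "real \<Rightarrow> 'a::metric_space"
  assumes lip: "B-lipschitz_on {a..b} x" and "a \<le> b"
  shows "B-lipschitz_on UNIV (\<lambda>t. x (clamp a b t))"
proof -
  have "1-lipschitz_on UNIV (clamp a b)"
    by (rule lipschitz_onI) (simp_all add: dist_clamps_le_dist_args)
  moreover have "clamp a b ` UNIV \<subseteq> {a..b}"
    using \<open>a \<le> b\<close> clamp_in_interval[of a b] by (auto simp: cbox_interval)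
  ultimately show ?thesis
    using lipschitz_on_compose2[of 1 UNIV "clamp a b" B x] lipschitz_on_subset[OF lip] by auto
qed

lemma integrable_norm_vector_derivative_lipschitz:
  fixes x :: "real \<Rightarrow> 'a::euclidean_space"
  assumes lip: "B-lipschitz_on {a..b} x"
  shows "(\<lambda>t. norm (vector_derivative x (at t))) integrable_on {a..b}"
proof (cases "a \<le> b")
  case True
  define xc where "xc t = x (clamp a b t)" for t
  have lip_xc: "B-lipschitz_on UNIV xc"
    unfolding xc_def by (rule lipschitz_on_clamp_extension[OF lip True])
  note cont_xc = lipschitz_on_continuous_on[OF lip_xc]
  have meas: "(\<lambda>t. norm (vector_derivative xc (at t))) \<in> borel_measurable (lebesgue_on {a..b})"
    by (rule measurable_restrict_space1,
        rule measurable_compose[OF borel_measurable_vector_derivative[OF cont_xc] borel_measurable_norm])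
  \<comment> \<open>Where \<open>xc\<close> is not differentiable, \<open>vector_derivative\<close> is the junk value \<open>SOME v. False\<close>.\<close>
  have bound: "norm (norm (vector_derivative xc (at t))) \<le> B + norm (SOME v::'a. False)" for t
  proof (cases "\<exists>v. (xc has_vector_derivative v) (at t)")
    case True
    then obtain v where v: "(xc has_vector_derivative v) (at t)" ..
    then show ?thesis
      using has_vector_derivative_norm_le_lipschitz[OF v lip_xc] by (simp add: vector_derivative_at add_increasing2)
  next
    case False
    then show ?thesis
      using lipschitz_on_nonneg[OF lip_xc] by (simp add: vector_derivative_not_differentiable)
  qed
  have "(\<lambda>t. norm (vector_derivative xc (at t))) integrable_on {a..b}"
    by (rule measurable_bounded_by_integrable_imp_integrable[OF meas integrable_on_const bound]) auto
  then show ?thesis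
  proof (rule integrable_spike)
    show "negligible {a, b}" by simp
    fix t assume t: "t \<in> {a..b} - {a, b}"
    have "\<forall>\<^sub>F s in nhds t. s \<in> UNIV \<longrightarrow> x s = xc s"
      unfolding eventually_nhds using t
      by (intro exI[of _ "{a<..<b}"]) (auto simp: xc_def cbox_interval)
    then have "vector_derivative x (at t) = vector_derivative xc (at t)"
      by (rule vector_derivative_cong_eq) auto
    then show "norm (vector_derivative x (at t)) = norm (vector_derivative xc (at t))"
      by simp
  qed
qed auto

section \<open>Feasible trajectories\<close>

lemma arclength_eq_integral_at:
  assumes "0 \<le> T"
  shows "arclength x T = integral {0..T} (\<lambda>t. norm (vector_derivative x (at t)))"
  unfolding arclength_def
proof (rule integral_spike)
  show "negligible {0, T}" by simp
  fix t assume "t \<in> {0..T} - {0, T}"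
  then have "at t within {0..T} = at t"
    by (intro at_within_interior) auto
  then show "norm (vector_derivative x (at t)) = norm (vector_derivative x (at t within {0..T}))"
    by simp
qed

lemma arclength_nonneg: "0 \<le> arclength x T"
  unfolding arclength_def
  by (cases "(\<lambda>t. norm (vector_derivative x (at t within {0..T}))) integrable_on {0..T}")
     (auto intro: integral_nonneg simp: not_integrable_integral)

definition control_field ::
  "('m::finite \<Rightarrow> real^'n \<Rightarrow> real^'n) \<Rightarrow> (real \<Rightarrow> real^'m) \<Rightarrow> (real \<Rightarrow> real^'n) \<Rightarrow> real \<Rightarrow> real^'n" where
  "control_field g u x s = (\<Sum>i\<in>UNIV. u s $ i *\<^sub>R g i (x s))"

lemma feasible_iff:
  "feasible \<M> g U x T u \<longleftrightarrow>
     0 \<le> T \<and> u measurable_on {0..T} \<and> (\<forall>t\<in>{0..T}. u t \<in> U \<and> x t \<in> \<M>) \<and>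
     control_field g u x integrable_on {0..T} \<and>
     (\<forall>t\<in>{0..T}. x t = x 0 + integral {0..t} (control_field g u x))"
  unfolding feasible_def control_field_def[abs_def] ..

lemma feasibleD:
  assumes "feasible \<M> g U x T u"
  shows "0 \<le> T" "u measurable_on {0..T}" "\<And>t. t \<in> {0..T} \<Longrightarrow> u t \<in> U"
    "\<And>t. t \<in> {0..T} \<Longrightarrow> x t \<in> \<M>" "control_field g u x integrable_on {0..T}"
    "\<And>t. t \<in> {0..T} \<Longrightarrow> x t = x 0 + integral {0..t} (control_field g u x)"
  using assms unfolding feasible_iff by blast+

lemma feasible_continuous_on:
  assumes "feasible \<M> g U x T u"
  shows "continuous_on {0..T} x"
proof -
  have "continuous_on {0..T} (\<lambda>t. x 0 + integral {0..t} (control_field g u x))"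
    by (intro continuous_intros indefinite_integral_continuous_1 feasibleD(5)[OF assms])
  then show ?thesis
    using feasibleD(6)[OF assms] by (metis (no_types, lifting) continuous_on_cong)
qed

lemma feasible_has_integral:
  assumes feas: "feasible \<M> g U x T u" and "0 \<le> s" "s \<le> t" "t \<le> T"
  shows "(control_field g u x has_integral (x t - x s)) {s..t}"
proof -
  have "control_field g u x integrable_on {0..t}"
    by (rule integrable_subinterval_real[OF feasibleD(5)[OF feas]]) (use assms in auto)
  then have "integral {0..s} (control_field g u x) + integral {s..t} (control_field g u x)
      = integral {0..t} (control_field g u x)"
    by (rule Henstock_Kurzweil_Integration.integral_combine[OF assms(2,3)])
  then have "x t - x s = integral {s..t} (control_field g u x)"
    using feasibleD(6)[OF feas, of s] feasibleD(6)[OF feas, of t] assms by (simp add: algebra_simps)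
  moreover have "control_field g u x integrable_on {s..t}"
    by (rule integrable_subinterval_real[OF feasibleD(5)[OF feas]]) (use assms in auto)
  ultimately show ?thesis
    by (simp add: has_integral_integral)
qed

lemma feasible_control_field_bounded:
  fixes g :: "'m::finite \<Rightarrow> real^'n \<Rightarrow> real^'n"
  assumes sys: "driftless_system \<M> g U" and feas: "feasible \<M> g U x T u"
  obtains B where "\<And>s. s \<in> {0..T} \<Longrightarrow> norm (control_field g u x s) \<le> B"
proof -
  obtain S where S: "\<M> \<subseteq> S" "\<And>i. smooth_on S (g i)" and "bounded U"
    using sys unfolding driftless_system_def by blast
  then obtain K where K: "\<And>v. v \<in> U \<Longrightarrow> norm v \<le> K"
    by (meson bounded_iff)
  have "continuous_on S (g i)" for i
    using S(2)[of i] unfolding smooth_on_def by (metis Ck.simps(1))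
  moreover have "x ` {0..T} \<subseteq> S"
    using feasibleD(4)[OF feas] S(1) by auto
  ultimately have "compact (g i ` x ` {0..T})" for i
    by (meson compact_Icc compact_continuous_image continuous_on_subset feasible_continuous_on[OF feas])
  then have "bounded (\<Union>i. g i ` x ` {0..T})"
    by (simp add: bounded_UN compact_imp_bounded)
  then obtain G where G: "\<And>y. y \<in> (\<Union>i. g i ` x ` {0..T}) \<Longrightarrow> norm y \<le> G"
    unfolding bounded_iff by auto
  have "norm (control_field g u x s) \<le> CARD('m) * (K * G)" if s: "s \<in> {0..T}" for s
  proof -
    have "norm (control_field g u x s) \<le> (\<Sum>i\<in>UNIV. norm (u s $ i *\<^sub>R g i (x s)))"
      unfolding control_field_def by (rule norm_sum)
    also have "\<dots> \<le> (\<Sum>i\<in>(UNIV::'m set). K * G)"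
    proof (rule sum_mono)
      fix i :: 'm
      have "\<bar>u s $ i\<bar> \<le> K"
        using component_le_norm_cart[of "u s" i] K[OF feasibleD(3)[OF feas s]] by linarith
      moreover have "norm (g i (x s)) \<le> G"
        using s by (intro G) blast
      ultimately show "norm (u s $ i *\<^sub>R g i (x s)) \<le> K * G"
        by (simp add: mult_mono')
    qed
    finally show ?thesis by simp
  qed
  then show ?thesis using that by blast
qed

lemma feasible_lipschitz:
  assumes sys: "driftless_system \<M> g U" and feas: "feasible \<M> g U x T u"
  obtains B where "B-lipschitz_on {0..T} x"
proof -
  obtain B where B: "\<And>s. s \<in> {0..T} \<Longrightarrow> norm (control_field g u x s) \<le> B"
    using feasible_control_field_bounded[OF sys feas] by blast
  have "dist (x s) (x t) \<le> max B 0 * dist s t" if st: "s \<in> {0..T}" "t \<in> {0..T}" "s \<le> t" for s t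
  proof -
    have int: "(control_field g u x has_integral (x t - x s)) {s..t}"
      using feasible_has_integral[OF feas] st by simp
    have bound: "norm (control_field g u x r) \<le> max B 0" if "r \<in> {s..t} - {}" for r
      using B[of r] that st by (simp add: le_max_iff_disj)
    from has_integral_bound_real[OF max.cobounded2 finite.emptyI int bound]
    have "norm (x t - x s) \<le> max B 0 * (t - s)"
      using st by simp
    then show ?thesis
      using st by (simp add: dist_norm dist_real_def norm_minus_commute)
  qed
  then have "(max B 0)-lipschitz_on {0..T} x"
    by (intro lipschitz_on_leI) auto
  then show ?thesis ..
qed

lemma feasible_integrable_norm_derivative:
  assumes "driftless_system \<M> g U" and "feasible \<M> g U x T u"
  shows "(\<lambda>t. norm (vector_derivative x (at t))) integrable_on {0..T}"
  using feasible_lipschitz[OF assms] integrable_norm_vector_derivative_lipschitz by metis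

section \<open>Reversing, restricting and appending trajectories\<close>

lemma measurable_on_affine_real:
  fixes f :: "real \<Rightarrow> 'b::real_normed_vector"
  assumes f: "f measurable_on S" and c: "c \<noteq> 0"
  shows "(\<lambda>t. f (c * t + a)) measurable_on {t. c * t + a \<in> S}"
proof -
  obtain N F where N: "negligible N" and cF: "\<And>n. continuous_on UNIV (F n)"
    and lim: "\<And>x. x \<notin> N \<Longrightarrow> (\<lambda>n. F n x) \<longlonglongrightarrow> (if x \<in> S then f x else 0)"
    using f unfolding measurable_on_def by blast
  define N' where "N' = (\<lambda>y. (y - a) / c) ` N"
  have "negligible N'"
    unfolding N'_def
  proof (rule negligible_differentiable_image_negligible[OF _ N])
    have "((\<lambda>y. (y - a) / c) has_derivative (\<lambda>h. h / c)) (at y)" for y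
      using c by (auto intro!: derivative_eq_intros)
    then show "(\<lambda>y. (y - a) / c) differentiable_on N"
      unfolding differentiable_on_def differentiable_def by (blast intro: has_derivative_at_withinI)
  qed simp
  moreover have "c * t + a \<notin> N" if "t \<notin> N'" for t
  proof
    assume "c * t + a \<in> N"
    then have "((c * t + a) - a) / c \<in> N'" unfolding N'_def by blast
    with that c show False by simp
  qed
  moreover have "continuous_on UNIV (\<lambda>t. F n (c * t + a))" for n
    by (rule continuous_on_compose2[OF cF]) (auto intro: continuous_intros)
  ultimately show ?thesis
    unfolding measurable_on_def using lim by (intro exI[of _ N'] exI[of _ "\<lambda>n t. F n (c * t + a)"]) auto
qed

lemma measurable_on_subset:
  fixes f :: "'a::euclidean_space \<Rightarrow> 'b::real_normed_vector"
  assumes f: "f measurable_on S" and "T \<subseteq> S" and T: "T \<in> sets lebesgue"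
  shows "f measurable_on T"
proof -
  have "(\<lambda>x. if x \<in> S then f x else 0) measurable_on UNIV"
    using f measurable_on_UNIV by blast
  then have "(\<lambda>x. if x \<in> T then (if x \<in> S then f x else 0) else 0) measurable_on UNIV"
    by (rule measurable_on_restrict[OF _ T])
  moreover have "(\<lambda>x. if x \<in> T then (if x \<in> S then f x else 0) else 0) = (\<lambda>x. if x \<in> T then f x else 0)"
    using \<open>T \<subseteq> S\<close> by (auto simp: fun_eq_iff)
  ultimately show ?thesis
    using measurable_on_UNIV[of T f] by simp
qed

lemma has_vector_derivative_affine_comp:
  fixes x :: "real \<Rightarrow> 'a::real_normed_vector"
  assumes "(x has_vector_derivative v) (at (c * t + a))"
  shows "((\<lambda>s. x (c * s + a)) has_vector_derivative c *\<^sub>R v) (at t)"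
proof -
  have "((\<lambda>s. c * s + a) has_vector_derivative c) (at t)"
    by (auto intro!: derivative_eq_intros simp flip: has_real_derivative_iff_has_vector_derivative)
  from vector_diff_chain_at[OF this assms] show ?thesis
    by (simp add: o_def)
qed

lemma norm_vector_derivative_affine_comp:
  fixes x :: "real \<Rightarrow> 'a::real_normed_vector"
  assumes c: "\<bar>c\<bar> = 1"
  shows "norm (vector_derivative (\<lambda>s. x (c * s + a)) (at t)) = norm (vector_derivative x (at (c * t + a)))"
proof (cases "\<exists>v. (x has_vector_derivative v) (at (c * t + a))")
  case True
  then obtain v where v: "(x has_vector_derivative v) (at (c * t + a))" ..
  have "vector_derivative (\<lambda>s. x (c * s + a)) (at t) = c *\<^sub>R v"
    by (rule vector_derivative_at[OF has_vector_derivative_affine_comp[OF v]])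
  moreover have "vector_derivative x (at (c * t + a)) = v"
    by (rule vector_derivative_at[OF v])
  ultimately show ?thesis
    using c by simp
next
  case False
  have cc: "c * c = 1"
    using c abs_mult_self_eq[of c] by simp
  have inverse: "c * (c * s + - c * a) + a = s" "c * (c * s + a) + - c * a = s" for s
    by (simp_all add: right_diff_distrib distrib_left mult.assoc[symmetric] cc)
  have "\<nexists>w. ((\<lambda>s. x (c * s + a)) has_vector_derivative w) (at t)"
  proof
    assume "\<exists>w. ((\<lambda>s. x (c * s + a)) has_vector_derivative w) (at t)"
    then obtain w where "((\<lambda>s. x (c * s + a)) has_vector_derivative w) (at (c * (c * t + a) + - c * a))"
      by (auto simp only: inverse)
    from has_vector_derivative_affine_comp[OF this]
    have "(x has_vector_derivative c *\<^sub>R w) (at (c * t + a))"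
      by (simp only: inverse)
    with False show False by blast
  qed
  then show ?thesis
    using False by (simp add: vector_derivative_not_differentiable)
qed

lemma arclength_reverse:
  assumes "0 \<le> T"
  shows "arclength (\<lambda>t. x (T - t)) T = arclength x T"
proof -
  let ?h = "\<lambda>t. norm (vector_derivative x (at t))"
  have "arclength (\<lambda>t. x (T - t)) T = integral {0..T} (\<lambda>t. ?h (T - t))"
    using norm_vector_derivative_affine_comp[of "-1" x T] by (simp add: arclength_eq_integral_at[OF assms])
  also have "\<dots> = integral {-T..0} (\<lambda>t. ?h (- t))"
    using integral_shift_real_ivl[of "-T" "-T" 0 "\<lambda>t. ?h (- t)"] by simp
  also have "\<dots> = arclength x T"
    using Henstock_Kurzweil_Integration.integral_reflect_real[of T 0 ?h] by (simp add: arclength_eq_integral_at[OF assms])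
  finally show ?thesis .
qed

lemma arclength_shift:
  assumes "a \<le> b"
  shows "arclength (\<lambda>s. x (s + a)) (b - a) = integral {a..b} (\<lambda>t. norm (vector_derivative x (at t)))"
proof -
  have "arclength (\<lambda>s. x (s + a)) (b - a) = integral {a - a..b - a} (\<lambda>s. norm (vector_derivative x (at (s + a))))"
    using norm_vector_derivative_affine_comp[of 1 x a] assms by (simp add: arclength_eq_integral_at)
  also have "\<dots> = integral {a..b} (\<lambda>t. norm (vector_derivative x (at t)))"
    by (rule integral_shift_real_ivl)
  finally show ?thesis .
qed

lemma feasible_reverse:
  assumes sys: "driftless_system \<M> g U" and feas: "feasible \<M> g U x T u"
  shows "feasible \<M> g U (\<lambda>t. x (T - t)) T (\<lambda>t. - u (T - t))"
proof -
  note T = feasibleD(1)[OF feas]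
  have field: "control_field g (\<lambda>t. - u (T - t)) (\<lambda>t. x (T - t)) = (\<lambda>s. - control_field g u x (T - s))"
    by (simp add: fun_eq_iff control_field_def sum_negf)
  have int: "(control_field g (\<lambda>t. - u (T - t)) (\<lambda>t. x (T - t)) has_integral (x (T - t) - x T)) {0..t}"
    if "t \<in> {0..T}" for t
  proof -
    have "(control_field g u x has_integral (x T - x (T - t))) {T - t..T}"
      using feasible_has_integral[OF feas] that by simp
    then have "((\<lambda>s. control_field g u x (- s)) has_integral (x T - x (T - t))) {-T..-(T - t)}"
      by (simp only: Henstock_Kurzweil_Integration.has_integral_reflect_real)
    from has_integral_neg[OF has_integral_shift_real_ivl[OF this, of "-T"]] show ?thesis
      unfolding field by simp
  qed
  have "(\<lambda>t. u ((-1) * t + T)) measurable_on {t. (-1) * t + T \<in> {0..T}}"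
    by (rule measurable_on_affine_real[OF feasibleD(2)[OF feas]]) simp
  moreover have "{t. (-1) * t + T \<in> {0..T}} = {0..T}"
    by auto
  ultimately have meas: "(\<lambda>t. - u (T - t)) measurable_on {0..T}"
    by (simp add: measurable_on_minus)
  have sym: "- v \<in> U" if "v \<in> U" for v
    using sys that unfolding driftless_system_def by blast
  show ?thesis
    unfolding feasible_iff
  proof (intro conjI ballI)
    fix t assume t: "t \<in> {0..T}"
    show "- u (T - t) \<in> U"
      using t by (intro sym feasibleD(3)[OF feas]) auto
    show "x (T - t) \<in> \<M>"
      using t by (intro feasibleD(4)[OF feas]) auto
    show "x (T - t) = x (T - 0) + integral {0..t} (control_field g (\<lambda>t. - u (T - t)) (\<lambda>t. x (T - t)))"
      using integral_unique[OF int[OF t]] by simp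
  next
    show "control_field g (\<lambda>t. - u (T - t)) (\<lambda>t. x (T - t)) integrable_on {0..T}"
      using int[of T] T by (auto intro: has_integral_integrable)
  qed (use T meas in auto)
qed

lemma feasible_shift:
  assumes feas: "feasible \<M> g U x T u" and ab: "0 \<le> a" "a \<le> b" "b \<le> T"
  shows "feasible \<M> g U (\<lambda>s. x (s + a)) (b - a) (\<lambda>s. u (s + a))"
proof -
  have field: "control_field g (\<lambda>s. u (s + a)) (\<lambda>s. x (s + a)) = (\<lambda>s. control_field g u x (s + a))"
    by (simp add: fun_eq_iff control_field_def)
  have int: "(control_field g (\<lambda>s. u (s + a)) (\<lambda>s. x (s + a)) has_integral (x (t + a) - x a)) {0..t}"
    if "t \<in> {0..b - a}" for t
  proof -
    have "(control_field g u x has_integral (x (t + a) - x a)) {a..t + a}"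
      using feasible_has_integral[OF feas] that ab by simp
    from has_integral_shift_real_ivl[OF this, of a] show ?thesis
      unfolding field by simp
  qed
  have "(\<lambda>t. u (1 * t + a)) measurable_on {t. 1 * t + a \<in> {0..T}}"
    by (rule measurable_on_affine_real[OF feasibleD(2)[OF feas]]) simp
  then have "(\<lambda>s. u (s + a)) measurable_on {t. t + a \<in> {0..T}}"
    by simp
  then have meas: "(\<lambda>s. u (s + a)) measurable_on {0..b - a}"
    by (rule measurable_on_subset) (use ab in auto)
  show ?thesis
    unfolding feasible_iff
  proof (intro conjI ballI)
    fix t assume t: "t \<in> {0..b - a}"
    show "u (t + a) \<in> U"
      using t ab by (intro feasibleD(3)[OF feas]) auto
    show "x (t + a) \<in> \<M>"
      using t ab by (intro feasibleD(4)[OF feas]) auto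
    show "x (t + a) = x (0 + a) + integral {0..t} (control_field g (\<lambda>s. u (s + a)) (\<lambda>s. x (s + a)))"
      using integral_unique[OF int[OF t]] by simp
  next
    show "control_field g (\<lambda>s. u (s + a)) (\<lambda>s. x (s + a)) integrable_on {0..b - a}"
      using int[of "b - a"] ab by (auto intro: has_integral_integrable)
  qed (use ab meas in auto)
qed

definition traj_append :: "(real \<Rightarrow> 'a) \<Rightarrow> real \<Rightarrow> (real \<Rightarrow> 'a) \<Rightarrow> real \<Rightarrow> 'a" where
  "traj_append x1 T1 x2 t = (if t \<le> T1 then x1 t else x2 (t - T1))"

lemma measurable_on_traj_append:
  fixes u1 u2 :: "real \<Rightarrow> 'b::euclidean_space"
  assumes u1: "u1 measurable_on {0..T1}" and u2: "u2 measurable_on {0..T2}"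
  shows "traj_append u1 T1 u2 measurable_on {0..T1 + T2}"
proof -
  have "(\<lambda>t. u2 (1 * t + - T1)) measurable_on {t. 1 * t + - T1 \<in> {0..T2}}"
    by (rule measurable_on_affine_real[OF u2]) simp
  moreover have "{t. 1 * t + - T1 \<in> {0..T2}} = {T1..T1 + T2}"
    by auto
  ultimately have "(\<lambda>t. u2 (t - T1)) measurable_on {T1..T1 + T2}"
    by simp
  then have "(\<lambda>t. if t \<in> {T1..T1 + T2} then u2 (t - T1) else 0) measurable_on UNIV"
    by (rule measurable_on_UNIV[THEN iffD2])
  moreover have "(\<lambda>t. if t \<in> {0..T1} then u1 t else 0) measurable_on UNIV"
    by (rule measurable_on_UNIV[THEN iffD2, OF u1])
  ultimately have "(\<lambda>t. (if t \<in> {0..T1} then u1 t else 0) + (if t \<in> {T1..T1 + T2} then u2 (t - T1) else 0))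
      measurable_on {0..T1 + T2}"
    by (intro measurable_on_subset[OF measurable_on_add]) auto
  then show ?thesis
  proof (rule measurable_on_spike[where S = "{T1}"])
    fix t assume "t \<in> {0..T1 + T2} - {T1}"
    then show "traj_append u1 T1 u2 t
        = (if t \<in> {0..T1} then u1 t else 0) + (if t \<in> {T1..T1 + T2} then u2 (t - T1) else 0)"
      by (auto simp: traj_append_def)
  qed simp
qed

lemma control_field_append_has_integral:
  assumes f1: "feasible \<M> g U x1 T1 u1" and f2: "feasible \<M> g U x2 T2 u2" and j: "x1 T1 = x2 0"
    and t: "0 \<le> t" "t \<le> T1 + T2"
  shows "(control_field g (traj_append u1 T1 u2) (traj_append x1 T1 x2) has_integral
      (traj_append x1 T1 x2 t - x1 0)) {0..t}"
proof -
  let ?F = "control_field g (traj_append u1 T1 u2) (traj_append x1 T1 x2)"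
  note T1 = feasibleD(1)[OF f1]
  have int1: "(?F has_integral (x1 s - x1 0)) {0..s}" if "0 \<le> s" "s \<le> T1" for s
  proof -
    have "(control_field g u1 x1 has_integral (x1 s - x1 0)) {0..s}"
      using feasible_has_integral[OF f1, of 0 s] that by simp
    then show ?thesis
      by (rule has_integral_spike_finite[where S = "{}", rotated 2])
         (use that in \<open>auto simp: control_field_def traj_append_def\<close>)
  qed
  show ?thesis
  proof (cases "t \<le> T1")
    case True
    then show ?thesis
      using int1[of t] t by (simp add: traj_append_def)
  next
    case False
    have "(control_field g u2 x2 has_integral (x2 (t - T1) - x2 0)) {0..t - T1}"
      using feasible_has_integral[OF f2, of 0 "t - T1"] t False by simp
    from has_integral_shift_real_ivl[OF this, of "-T1"]
    have "((\<lambda>s. control_field g u2 x2 (s - T1)) has_integral (x2 (t - T1) - x2 0)) {T1..t}"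
      by simp
    then have "(?F has_integral (x2 (t - T1) - x2 0)) {T1..t}"
      by (rule has_integral_spike_finite[where S = "{T1}", rotated 2])
         (auto simp: control_field_def traj_append_def)
    then have "(?F has_integral ((x1 T1 - x1 0) + (x2 (t - T1) - x2 0))) {0..t}"
      using False T1 int1[of T1] by (intro has_integral_combine[of 0 T1 t]) auto
    then show ?thesis
      using False j by (simp add: traj_append_def)
  qed
qed

lemma feasible_append:
  assumes f1: "feasible \<M> g U x1 T1 u1" and f2: "feasible \<M> g U x2 T2 u2" and j: "x1 T1 = x2 0"
  shows "feasible \<M> g U (traj_append x1 T1 x2) (T1 + T2) (traj_append u1 T1 u2)"
proof -
  define z w where "z = traj_append x1 T1 x2" and "w = traj_append u1 T1 u2"
  note T1 = feasibleD(1)[OF f1] and T2 = feasibleD(1)[OF f2]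
  have int: "(control_field g w z has_integral (z t - z 0)) {0..t}" if "t \<in> {0..T1 + T2}" for t
    using control_field_append_has_integral[OF f1 f2 j, of t] that T1 by (simp add: z_def w_def traj_append_def)
  show ?thesis
    unfolding feasible_iff z_def[symmetric] w_def[symmetric]
  proof (intro conjI ballI)
    fix t assume t: "t \<in> {0..T1 + T2}"
    show "w t \<in> U"
      using t feasibleD(3)[OF f1, of t] feasibleD(3)[OF f2, of "t - T1"] by (auto simp: w_def traj_append_def)
    show "z t \<in> \<M>"
      using t feasibleD(4)[OF f1, of t] feasibleD(4)[OF f2, of "t - T1"] by (auto simp: z_def traj_append_def)
    show "z t = z 0 + integral {0..t} (control_field g w z)"
      using integral_unique[OF int[OF t]] by simp
  next
    show "control_field g w z integrable_on {0..T1 + T2}"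
      using int[of "T1 + T2"] T1 T2 by (auto intro: has_integral_integrable)
    show "w measurable_on {0..T1 + T2}"
      unfolding w_def by (rule measurable_on_traj_append[OF feasibleD(2)[OF f1] feasibleD(2)[OF f2]])
  qed (use T1 T2 in auto)
qed

lemma arclength_append:
  assumes T1: "0 \<le> T1" and T2: "0 \<le> T2"
    and int1: "(\<lambda>t. norm (vector_derivative x1 (at t))) integrable_on {0..T1}"
    and int2: "(\<lambda>t. norm (vector_derivative x2 (at t))) integrable_on {0..T2}"
  shows "arclength (traj_append x1 T1 x2) (T1 + T2) = arclength x1 T1 + arclength x2 T2"
proof -
  define z where "z = traj_append x1 T1 x2"
  let ?h = "\<lambda>t. norm (vector_derivative z (at t))"
  have "(?h has_integral arclength x1 T1) {0..T1}"
  proof (rule has_integral_spike_finite[where S = "{0, T1}", rotated 2])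
    show "((\<lambda>t. norm (vector_derivative x1 (at t))) has_integral arclength x1 T1) {0..T1}"
      using int1 by (simp add: arclength_eq_integral_at[OF T1] has_integral_integral)
    fix t assume t: "t \<in> {0..T1} - {0, T1}"
    have "\<forall>\<^sub>F s in nhds t. s \<in> UNIV \<longrightarrow> z s = x1 s"
      unfolding eventually_nhds using t
      by (intro exI[of _ "{..<T1}"]) (auto simp: z_def traj_append_def)
    then show "?h t = norm (vector_derivative x1 (at t))"
      by (subst vector_derivative_cong_eq) auto
  qed simp
  moreover have "(?h has_integral arclength x2 T2) {T1..T1 + T2}"
  proof (rule has_integral_spike_finite[where S = "{T1, T1 + T2}", rotated 2])
    have "((\<lambda>t. norm (vector_derivative x2 (at t))) has_integral arclength x2 T2) {0..T2}"
      using int2 by (simp add: arclength_eq_integral_at[OF T2] has_integral_integral)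
    from has_integral_shift_real_ivl[OF this, of "- T1"]
    show "((\<lambda>t. norm (vector_derivative (\<lambda>s. x2 (1 * s + - T1)) (at t))) has_integral arclength x2 T2)
        {T1..T1 + T2}"
      using norm_vector_derivative_affine_comp[of 1 x2 "- T1"] by (simp add: add.commute)
    fix t assume t: "t \<in> {T1..T1 + T2} - {T1, T1 + T2}"
    have "\<forall>\<^sub>F s in nhds t. s \<in> UNIV \<longrightarrow> z s = x2 (1 * s + - T1)"
      unfolding eventually_nhds using t
      by (intro exI[of _ "{T1<..}"]) (auto simp: z_def traj_append_def)
    then show "?h t = norm (vector_derivative (\<lambda>s. x2 (1 * s + - T1)) (at t))"
      by (subst vector_derivative_cong_eq) auto
  qed simp
  ultimately have "(?h has_integral arclength x1 T1 + arclength x2 T2) {0..T1 + T2}"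
    using T1 T2 by (intro has_integral_combine) auto
  then show ?thesis
    using T1 T2 by (simp add: z_def arclength_eq_integral_at integral_unique)
qed

section \<open>The sub-Riemannian distance\<close>

lemma sr_dist_le_arclength:
  assumes "feasible \<M> g U x T u" "x 0 = p" "x T = q"
  shows "sr_dist \<M> g U p q \<le> ereal (arclength x T)"
  unfolding sr_dist_def by (rule INF_lower2[of "(x, T, u)"]) (use assms in auto)

lemma sr_dist_nonneg: "0 \<le> sr_dist \<M> g U p q"
  unfolding sr_dist_def by (rule INF_greatest) (auto simp: arclength_nonneg)

lemma sr_dist_commute:
  assumes sys: "driftless_system \<M> g U"
  shows "sr_dist \<M> g U p q = sr_dist \<M> g U q p"
proof -
  have le: "sr_dist \<M> g U p q \<le> sr_dist \<M> g U q p" for p q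
    unfolding sr_dist_def[of \<M> g U q p]
  proof (rule INF_greatest)
    fix xTu assume "xTu \<in> {(x, T, u). feasible \<M> g U x T u \<and> x 0 = q \<and> x T = p}"
    then obtain x T u where xTu: "xTu = (x, T, u)" and feas: "feasible \<M> g U x T u"
      and "x 0 = q" "x T = p"
      by blast
    then have "sr_dist \<M> g U p q \<le> ereal (arclength (\<lambda>t. x (T - t)) T)"
      by (intro sr_dist_le_arclength[OF feasible_reverse[OF sys feas]]) auto
    then show "sr_dist \<M> g U p q \<le> ereal (arclength (fst xTu) (fst (snd xTu)))"
      using arclength_reverse[OF feasibleD(1)[OF feas], of x] by (simp add: xTu)
  qed
  show ?thesis
    using le[of p q] le[of q p] by simp
qed

lemma le_INF_add_INF_ereal:
  fixes f :: "'a \<Rightarrow> ereal" and g :: "'b \<Rightarrow> ereal"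
  assumes le: "\<And>a b. a \<in> A \<Longrightarrow> b \<in> B \<Longrightarrow> d \<le> f a + g b"
    and f: "\<And>a. 0 \<le> f a" and g: "\<And>b. 0 \<le> g b"
  shows "d \<le> (INF a\<in>A. f a) + (INF b\<in>B. g b)"
proof -
  have INF_nonneg: "0 \<le> (INF a\<in>A. f a)" "0 \<le> (INF b\<in>B. g b)"
    using f g by (auto intro: INF_greatest)
  consider "A = {} \<or> B = {}" | "A \<noteq> {}" "B \<noteq> {}"
    by blast
  then show ?thesis
  proof cases
    case 1
    then show ?thesis
      using INF_nonneg by (auto simp: top_ereal_def)
  next
    case 2
    have "d \<le> f a + (INF b\<in>B. g b)" if "a \<in> A" for a
    proof -
      have "d \<le> (INF b\<in>B. f a + g b)"
        using le[OF that] by (rule INF_greatest)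
      also have "\<dots> = f a + (INF b\<in>B. g b)"
        by (rule INF_ereal_add_right) (use 2 f g in auto)
      finally show ?thesis .
    qed
    then have "d \<le> (INF a\<in>A. f a + (INF b\<in>B. g b))"
      by (rule INF_greatest)
    also have "\<dots> = (INF a\<in>A. f a) + (INF b\<in>B. g b)"
      by (rule INF_ereal_add_left) (use 2 f INF_nonneg in auto)
    finally show ?thesis .
  qed
qed

lemma sr_dist_triangle:
  fixes g :: "'m::finite \<Rightarrow> real^'n \<Rightarrow> real^'n"
  assumes sys: "driftless_system \<M> g U"
  shows "sr_dist \<M> g U p r \<le> sr_dist \<M> g U p q + sr_dist \<M> g U q r"
proof -
  define len :: "(real \<Rightarrow> real^'n) \<times> real \<times> (real \<Rightarrow> real^'m) \<Rightarrow> ereal"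
    where "len xTu = ereal (arclength (fst xTu) (fst (snd xTu)))" for xTu
  define A where "A = {(x, T, u). feasible \<M> g U x T u \<and> x 0 = p \<and> x T = q}"
  define B where "B = {(x, T, u). feasible \<M> g U x T u \<and> x 0 = q \<and> x T = r}"
  have dpq: "sr_dist \<M> g U p q = (INF a\<in>A. len a)" and dqr: "sr_dist \<M> g U q r = (INF b\<in>B. len b)"
    unfolding sr_dist_def A_def B_def len_def by simp_all
  have len_nonneg: "0 \<le> len a" for a
    by (simp add: len_def arclength_nonneg)
  have concat: "sr_dist \<M> g U p r \<le> len a + len b" if "a \<in> A" "b \<in> B" for a b
  proof -
    obtain x1 T1 u1 where a: "a = (x1, T1, u1)" and f1: "feasible \<M> g U x1 T1 u1" and "x1 0 = p" "x1 T1 = q"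
      using \<open>a \<in> A\<close> unfolding A_def by blast
    obtain x2 T2 u2 where b: "b = (x2, T2, u2)" and f2: "feasible \<M> g U x2 T2 u2" and "x2 0 = q" "x2 T2 = r"
      using \<open>b \<in> B\<close> unfolding B_def by blast
    have "traj_append x1 T1 x2 0 = p" "traj_append x1 T1 x2 (T1 + T2) = r"
      using \<open>x1 0 = p\<close> \<open>x1 T1 = q\<close> \<open>x2 0 = q\<close> \<open>x2 T2 = r\<close> feasibleD(1)[OF f1] feasibleD(1)[OF f2]
      by (auto simp: traj_append_def)
    then have "sr_dist \<M> g U p r \<le> ereal (arclength (traj_append x1 T1 x2) (T1 + T2))"
      using \<open>x1 T1 = q\<close> \<open>x2 0 = q\<close> by (intro sr_dist_le_arclength[OF feasible_append[OF f1 f2]]) auto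
    also have "\<dots> = len a + len b"
      using arclength_append[OF feasibleD(1)[OF f1] feasibleD(1)[OF f2]
          feasible_integrable_norm_derivative[OF sys f1] feasible_integrable_norm_derivative[OF sys f2]]
      by (simp add: a b len_def)
    finally show ?thesis .
  qed
  show ?thesis
    unfolding dpq dqr using concat len_nonneg len_nonneg by (rule le_INF_add_INF_ereal)
qed

lemma sr_dist_le_integral:
  assumes sys: "driftless_system \<M> g U" and feas: "feasible \<M> g U x T u"
    and ab: "0 \<le> a" "a \<le> b" "b \<le> T"
  shows "sr_dist \<M> g U (x a) (x b) \<le> ereal (integral {a..b} (\<lambda>t. norm (vector_derivative x (at t))))"
proof -
  have "sr_dist \<M> g U (x a) (x b) \<le> ereal (arclength (\<lambda>s. x (s + a)) (b - a))"
    by (rule sr_dist_le_arclength[OF feasible_shift[OF feas ab]]) auto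
  then show ?thesis
    by (simp add: arclength_shift[OF \<open>a \<le> b\<close>])
qed

lemma sr_dist_le_integral_perturbed:
  fixes g :: "'m::finite \<Rightarrow> real^'n \<Rightarrow> real^'n"
  assumes sys: "driftless_system \<M> g U" and feas: "feasible \<M> g U x T u"
    and ab: "0 \<le> a" "a \<le> b" "b \<le> T"
    and p: "sr_dist \<M> g U (x a) p \<le> ereal r" and q: "sr_dist \<M> g U (x b) q \<le> ereal r'"
  shows "sr_dist \<M> g U p q \<le> ereal (r + integral {a..b} (\<lambda>t. norm (vector_derivative x (at t))) + r')"
proof -
  let ?d = "sr_dist \<M> g U"
  have "?d p q \<le> ?d p (x a) + (?d (x a) (x b) + ?d (x b) q)"
    using sr_dist_triangle[OF sys] by (metis add_left_mono order_trans)
  also have "\<dots> \<le> ereal r + (ereal (integral {a..b} (\<lambda>t. norm (vector_derivative x (at t)))) + ereal r')"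
    using p q sr_dist_le_integral[OF sys feas ab] by (intro add_mono) (auto simp: sr_dist_commute[OF sys])
  finally show ?thesis
    by (simp add: add.assoc)
qed

section \<open>Summing over the partition\<close>

lemma sum_integral_consecutive:
  fixes f :: "real \<Rightarrow> 'a::banach"
  assumes mono: "\<And>m. k \<le> m \<Longrightarrow> m < n \<Longrightarrow> \<tau> m \<le> \<tau> (Suc m)" and "k \<le> n"
    and int: "f integrable_on {\<tau> k..\<tau> n}"
  shows "(\<Sum>m\<in>{k..<n}. integral {\<tau> m..\<tau> (Suc m)} f) = integral {\<tau> k..\<tau> n} f"
proof -
  have mono_le: "\<tau> i \<le> \<tau> i'" if "k \<le> i" "i \<le> i'" "i' \<le> n" for i i'
    by (rule lift_Suc_mono_le_ivl[of "{k..<n}"]) (use mono that in auto)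
  have "j \<le> n \<longrightarrow> (\<Sum>m\<in>{k..<j}. integral {\<tau> m..\<tau> (Suc m)} f) = integral {\<tau> k..\<tau> j} f"
    if "k \<le> j" for j
    using that
  proof (induction j rule: dec_induct)
    case base
    show ?case by simp
  next
    case (step j)
    show ?case
    proof
      assume "Suc j \<le> n"
      then have "\<tau> k \<le> \<tau> j" "\<tau> j \<le> \<tau> (Suc j)" "\<tau> (Suc j) \<le> \<tau> n"
        using \<open>k \<le> j\<close> by (auto intro!: mono_le)
      moreover have "f integrable_on {\<tau> k..\<tau> (Suc j)}"
        by (rule integrable_subinterval_real[OF int]) (use calculation in auto)
      ultimately have "integral {\<tau> k..\<tau> j} f + integral {\<tau> j..\<tau> (Suc j)} f = integral {\<tau> k..\<tau> (Suc j)} f"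
        by (intro Henstock_Kurzweil_Integration.integral_combine)
      then show "(\<Sum>m\<in>{k..<Suc j}. integral {\<tau> m..\<tau> (Suc m)} f) = integral {\<tau> k..\<tau> (Suc j)} f"
        using step \<open>Suc j \<le> n\<close> by simp
    qed
  qed
  then show ?thesis
    using \<open>k \<le> n\<close> by blast
qed

lemma sum_consecutive_pairs_le:
  fixes r :: "nat \<Rightarrow> real"
  assumes "\<And>m. 0 \<le> r m"
  shows "(\<Sum>m\<in>{1..<M}. r m + r (Suc m)) \<le> 2 * (\<Sum>m=1..M. r m)"
proof -
  have "(\<Sum>m\<in>{1..<M}. r m) \<le> (\<Sum>m=1..M. r m)"
    by (rule sum_mono2) (auto simp: assms)
  moreover have "(\<Sum>m\<in>{1..<M}. r (Suc m)) = (\<Sum>m\<in>{Suc 1..<Suc M}. r m)"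
    by (rule sum.shift_bounds_Suc_ivl[symmetric])
  moreover have "\<dots> \<le> (\<Sum>m=1..M. r m)"
    by (rule sum_mono2) (auto simp: assms)
  ultimately show ?thesis
    by (simp add: sum.distrib)
qed

lemma sum_if_mem_le:
  fixes G :: "nat set" and \<rho> \<alpha> \<beta> :: real
  assumes "G \<subseteq> {1..M}" "(1 - \<alpha>) * M \<le> card G" "\<beta> \<le> 1" "0 \<le> \<rho>"
  shows "(\<Sum>m=1..M. if m \<in> G then \<beta> * \<rho> else \<rho>) \<le> M * \<rho> * (\<beta> + \<alpha> - \<alpha> * \<beta>)"
proof -
  have "(\<Sum>m=1..M. if m \<in> G then \<beta> * \<rho> else \<rho>) = (\<Sum>m=1..M. \<rho> - (if m \<in> G then (1 - \<beta>) * \<rho> else 0))"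
    by (rule sum.cong) (auto simp: algebra_simps)
  also have "\<dots> = M * \<rho> - card G * ((1 - \<beta>) * \<rho>)"
    using assms(1) by (simp add: sum_subtractf sum.If_cases Int_absorb1)
  also have "\<dots> \<le> M * \<rho> - (1 - \<alpha>) * M * ((1 - \<beta>) * \<rho>)"
    using assms by (intro diff_left_mono mult_right_mono) auto
  also have "\<dots> = M * \<rho> * (\<beta> + \<alpha> - \<alpha> * \<beta>)"
    by (simp add: algebra_simps)
  finally show ?thesis .
qed

theorem lemma3:
  fixes \<M> :: "(real^'n) set" and g :: "'m::finite \<Rightarrow> real^'n \<Rightarrow> real^'n"
    and U :: "(real^'m) set"
    and x :: "real \<Rightarrow> real^'n" and T :: real and u :: "real \<Rightarrow> real^'m"
    and M :: nat and \<tau> :: "nat \<Rightarrow> real" and \<rho> \<beta> \<alpha> :: real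
    and y :: "nat \<Rightarrow> real^'n"
  assumes sys: "driftless_system \<M> g U"
    and feas: "feasible \<M> g U x T u"
    and M1: "1 \<le> M"
    and part0: "\<tau> 1 = 0" and partT: "\<tau> M = T"
    and partmono: "\<And>m. 1 \<le> m \<Longrightarrow> m < M \<Longrightarrow> \<tau> m < \<tau> (Suc m)"
    and rho: "0 < \<rho>" and beta: "0 < \<beta>" "\<beta> < 1" and alpha: "0 \<le> \<alpha>" "\<alpha> \<le> 1"
    and yM: "\<And>m. 1 \<le> m \<Longrightarrow> m \<le> M \<Longrightarrow> y m \<in> \<M>"
    and a: "\<And>m. 1 \<le> m \<Longrightarrow> m \<le> M \<Longrightarrow> y m \<in> sr_ball \<M> g U (x (\<tau> m)) \<rho>"
    and b: "real (card {m \<in> {1..M}. y m \<in> sr_ball \<M> g U (x (\<tau> m)) (\<beta> * \<rho>)}) > (1 - \<alpha>) * real M"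
  shows "(\<Sum>m\<in>{1..<M}. sr_dist \<M> g U (y m) (y (Suc m)))
           \<le> ereal (arclength x T + 2 * real M * \<rho> * (\<beta> + \<alpha> - \<alpha> * \<beta>))"
proof -
  define G where "G = {m \<in> {1..M}. y m \<in> sr_ball \<M> g U (x (\<tau> m)) (\<beta> * \<rho>)}"
  define r where "r m = (if m \<in> G then \<beta> * \<rho> else \<rho>)" for m
  define I where "I m = integral {\<tau> m..\<tau> (Suc m)} (\<lambda>t. norm (vector_derivative x (at t)))" for m
  have mono: "\<tau> m \<le> \<tau> (Suc m)" if "1 \<le> m" "m < M" for m
    using partmono[OF that] by simp
  have \<tau>_range: "\<tau> m \<in> {0..T}" if "1 \<le> m" "m \<le> M" for m
    using lift_Suc_mono_le_ivl[of "{1..<M}" \<tau> 1 m] lift_Suc_mono_le_ivl[of "{1..<M}" \<tau> m M] mono that part0 partT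
    by auto
  have segment: "sr_dist \<M> g U (y m) (y (Suc m)) \<le> ereal (r m + I m + r (Suc m))" if "m \<in> {1..<M}" for m
    unfolding I_def using that \<tau>_range[of m] \<tau>_range[of "Suc m"] mono[of m] a[of m] a[of "Suc m"]
    by (intro sr_dist_le_integral_perturbed[OF sys feas]) (auto simp: r_def G_def sr_ball_def)
  have "(\<Sum>m\<in>{1..<M}. I m) = integral {\<tau> 1..\<tau> M} (\<lambda>t. norm (vector_derivative x (at t)))"
    unfolding I_def using mono M1 feasible_integrable_norm_derivative[OF sys feas]
    by (intro sum_integral_consecutive) (simp_all only: part0 partT)
  also have "\<dots> = arclength x T"
    unfolding part0 partT by (rule arclength_eq_integral_at[OF feasibleD(1)[OF feas], symmetric])
  finally have length: "(\<Sum>m\<in>{1..<M}. I m) = arclength x T" .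
  have "(\<Sum>m\<in>{1..<M}. r m + r (Suc m)) \<le> 2 * (\<Sum>m=1..M. r m)"
    using rho beta by (intro sum_consecutive_pairs_le) (simp add: r_def)
  also have "\<dots> \<le> 2 * (M * \<rho> * (\<beta> + \<alpha> - \<alpha> * \<beta>))"
    unfolding r_def using b beta rho by (intro mult_left_mono sum_if_mem_le) (auto simp: G_def)
  finally have radii: "(\<Sum>m\<in>{1..<M}. r m + r (Suc m)) \<le> 2 * real M * \<rho> * (\<beta> + \<alpha> - \<alpha> * \<beta>)"
    by simp
  have "(\<Sum>m\<in>{1..<M}. sr_dist \<M> g U (y m) (y (Suc m))) \<le> (\<Sum>m\<in>{1..<M}. ereal (r m + I m + r (Suc m)))"
    by (rule sum_mono) (rule segment)
  also have "\<dots> = ereal ((\<Sum>m\<in>{1..<M}. I m) + (\<Sum>m\<in>{1..<M}. r m + r (Suc m)))"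
    by (simp add: sum.distrib algebra_simps)
  also have "\<dots> \<le> ereal (arclength x T + 2 * real M * \<rho> * (\<beta> + \<alpha> - \<alpha> * \<beta>))"
    using length radii by simp
  finally show ?thesis .
qed

end
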